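(* Let $S$ be a semigroup with involution, $\phi:S\to\mathbb{H}$ positive definite, and $\lambda$ the representation of $S$ on the quaternionic pre-Hilbert space $H_\phi$ defined below. Then $\phi$ is exponentially bounded (i.e. $\alpha$-bounded for some absolute value $\alpha$ on $S$) if and only if $\lambda(s)$ is a bounded operator on $H_\phi$ (with respect to the norm $\|f\|=\langle f,f\rangle^{1/2}$) for every $s\in S$.
   Context: $\mathbb{H}$ is the real quaternion algebra. A semigroup with involution is a set $S$ with an associative binary operation $\circ$ with neutral element $e$ and a bijection $s\mapsto s^*$ with $(s^* )^*=s$, $(s\circ t)^*=t^*\circ s^*$. $\phi:S\to\mathbb{H}$ is positive definite if $\sum_{i,j=1}^k \overline{q_i}\phi(s_i^*\circ s_j)q_j$ is a nonnegative real number for all $k$, $s_i\in S$, $q_i\in\mathbb{H}$. An absolute value on $S$ is $\alpha:S\to[0,\infty)$ with $\alpha(e)=1$, $\alpha(s\circ t)\le\alpha(s)\alpha(t)$, $\alpha(s^* )=\alpha(s)$; $\phi$ is $\alpha$-bounded if $|\phi(s)|\le C\alpha(s)$ for all $s$ and some $C>0$. For $s\in S$ let $\phi_s:S\to\mathbb{H}$, $\phi_s(t)=\phi(t^*\circ s)$. $H_\phi$ is the right $\mathbb{H}$-linear span (scalars acting pointwise from the right) of $\{\phi_s\}_{s\in S}$ inside $\mathbb{H}^S$, with the quaternionic inner product $\langle \sum_s\phi_sq_s,\sum_t\phi_tp_t\rangle=\sum_{s,t}\overline{p_t}\,\phi(t^*\circ s)\,q_s$ (finite sums). The representation $\lambda$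 is given by $\lambda(s)\big(\sum_t\phi_tq_t\big)=\sum_t\phi_{s\circ t}q_t$. *)

theory Defs
  imports Complex_Main
begin

datatype quat = Quat (qRe: real) (qIm1: real) (qIm2: real) (qIm3: real)

lemma quat_eq_iff: "x = y \<longleftrightarrow> qRe x = qRe y \<and> qIm1 x = qIm1 y \<and> qIm2 x = qIm2 y \<and> qIm3 x = qIm3 y"
  by (cases x; cases y) auto

instantiation quat :: ring_1
begin
definition "0 = Quat 0 0 0 0"
definition "1 = Quat 1 0 0 0"
definition "x + y = Quat (qRe x + qRe y) (qIm1 x + qIm1 y) (qIm2 x + qIm2 y) (qIm3 x + qIm3 y)"
definition "- x = Quat (- qRe x) (- qIm1 x) (- qIm2 x) (- qIm3 x)"
definition "x - y = Quat (qRe x - qRe y) (qIm1 x - qIm1 y) (qIm2 x - qIm2 y) (qIm3 x - qIm3 y)"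
definition "x * y = Quat
   (qRe x * qRe y - qIm1 x * qIm1 y - qIm2 x * qIm2 y - qIm3 x * qIm3 y)
   (qRe x * qIm1 y + qIm1 x * qRe y + qIm2 x * qIm3 y - qIm3 x * qIm2 y)
   (qRe x * qIm2 y - qIm1 x * qIm3 y + qIm2 x * qRe y + qIm3 x * qIm1 y)
   (qRe x * qIm3 y + qIm1 x * qIm2 y - qIm2 x * qIm1 y + qIm3 x * qRe y)"
instance
  by standard (auto simp: quat_eq_iff zero_quat_def one_quat_def plus_quat_def
      uminus_quat_def minus_quat_def times_quat_def algebra_simps)
end

definition qcnj :: "quat \<Rightarrow> quat" where
  "qcnj x = Quat (qRe x) (- qIm1 x) (- qIm2 x) (- qIm3 x)"

definition qabs :: "quat \<Rightarrow> real" where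
  "qabs x = sqrt ((qRe x)\<^sup>2 + (qIm1 x)\<^sup>2 + (qIm2 x)\<^sup>2 + (qIm3 x)\<^sup>2)"

definition qreal :: "real \<Rightarrow> quat" where
  "qreal r = Quat r 0 0 0"

definition qnonneg_real :: "quat \<Rightarrow> bool" where
  "qnonneg_real x \<longleftrightarrow> (\<exists>r\<ge>0. x = qreal r)"

text \<open>A semigroup with involution on the carrier type 'a with operation mult,
  neutral element e and involution st (s \<mapsto> s^*).  Bijectivity of st follows
  from st (st s) = s.\<close>
definition semigroup_involution :: "('a \<Rightarrow> 'a \<Rightarrow> 'a) \<Rightarrow> 'a \<Rightarrow> ('a \<Rightarrow> 'a) \<Rightarrow> bool" where
  "semigroup_involution mult e st \<longleftrightarrow>
     (\<forall>s t u. mult (mult s t) u = mult s (mult t u)) \<and>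
     (\<forall>s. mult e s = s \<and> mult s e = s) \<and>
     bij st \<and>
     (\<forall>s. st (st s) = s) \<and>
     (\<forall>s t. st (mult s t) = mult (st t) (st s))"

definition positive_definite ::
  "('a \<Rightarrow> 'a \<Rightarrow> 'a) \<Rightarrow> ('a \<Rightarrow> 'a) \<Rightarrow> ('a \<Rightarrow> quat) \<Rightarrow> bool" where
  "positive_definite mult st \<phi> \<longleftrightarrow>
     (\<forall>(k::nat) (s::nat \<Rightarrow> 'a) (q::nat \<Rightarrow> quat).
        qnonneg_real (\<Sum>i\<in>{1..k}. \<Sum>j\<in>{1..k}. qcnj (q i) * \<phi> (mult (st (s i)) (s j)) * q j))"

definition absolute_value ::
  "('a \<Rightarrow> 'a \<Rightarrow> 'a) \<Rightarrow> 'a \<Rightarrow> ('a \<Rightarrow> 'a) \<Rightarrow> ('a \<Rightarrow> real) \<Rightarrow> bool" where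
  "absolute_value mult e st \<alpha> \<longleftrightarrow>
     (\<forall>s. \<alpha> s \<ge> 0) \<and> \<alpha> e = 1 \<and>
     (\<forall>s t. \<alpha> (mult s t) \<le> \<alpha> s * \<alpha> t) \<and>
     (\<forall>s. \<alpha> (st s) = \<alpha> s)"

definition alpha_bounded :: "('a \<Rightarrow> real) \<Rightarrow> ('a \<Rightarrow> quat) \<Rightarrow> bool" where
  "alpha_bounded \<alpha> \<phi> \<longleftrightarrow> (\<exists>C>0. \<forall>s. qabs (\<phi> s) \<le> C * \<alpha> s)"

definition exponentially_bounded ::
  "('a \<Rightarrow> 'a \<Rightarrow> 'a) \<Rightarrow> 'a \<Rightarrow> ('a \<Rightarrow> 'a) \<Rightarrow> ('a \<Rightarrow> quat) \<Rightarrow> bool" where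
  "exponentially_bounded mult e st \<phi> \<longleftrightarrow>
     (\<exists>\<alpha>. absolute_value mult e st \<alpha> \<and> alpha_bounded \<alpha> \<phi>)"

text \<open>Elements of H_phi are finite sums  sum_t phi_t q_t, represented by finite
  lists of pairs (t, q_t).  hvec gives the actual function S \<Rightarrow> H of such a sum.\<close>

definition phi_s :: "('a \<Rightarrow> 'a \<Rightarrow> 'a) \<Rightarrow> ('a \<Rightarrow> 'a) \<Rightarrow> ('a \<Rightarrow> quat) \<Rightarrow> 'a \<Rightarrow> 'a \<Rightarrow> quat" where
  "phi_s mult st \<phi> s = (\<lambda>t. \<phi> (mult (st t) s))"

definition hvec :: "('a \<Rightarrow> 'a \<Rightarrow> 'a) \<Rightarrow> ('a \<Rightarrow> 'a) \<Rightarrow> ('a \<Rightarrow> quat) \<Rightarrow> ('a \<times> quat) list \<Rightarrow> 'a \<Rightarrow> quat" where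
  "hvec mult st \<phi> xs = (\<lambda>u. \<Sum>(t, q)\<leftarrow>xs. phi_s mult st \<phi> t u * q)"

definition H_phi :: "('a \<Rightarrow> 'a \<Rightarrow> 'a) \<Rightarrow> ('a \<Rightarrow> 'a) \<Rightarrow> ('a \<Rightarrow> quat) \<Rightarrow> ('a \<Rightarrow> quat) set" where
  "H_phi mult st \<phi> = range (hvec mult st \<phi>)"

definition hinner :: "('a \<Rightarrow> 'a \<Rightarrow> 'a) \<Rightarrow> ('a \<Rightarrow> 'a) \<Rightarrow> ('a \<Rightarrow> quat) \<Rightarrow>
    ('a \<times> quat) list \<Rightarrow> ('a \<times> quat) list \<Rightarrow> quat" where
  "hinner mult st \<phi> xs ys = (\<Sum>(s, q)\<leftarrow>xs. \<Sum>(t, p)\<leftarrow>ys. qcnj p * \<phi> (mult (st t) s) * q)"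

definition hnorm :: "('a \<Rightarrow> 'a \<Rightarrow> 'a) \<Rightarrow> ('a \<Rightarrow> 'a) \<Rightarrow> ('a \<Rightarrow> quat) \<Rightarrow> ('a \<times> quat) list \<Rightarrow> real" where
  "hnorm mult st \<phi> xs = sqrt (qRe (hinner mult st \<phi> xs xs))"

definition hlambda :: "('a \<Rightarrow> 'a \<Rightarrow> 'a) \<Rightarrow> 'a \<Rightarrow> ('a \<times> quat) list \<Rightarrow> ('a \<times> quat) list" where
  "hlambda mult s xs = map (\<lambda>(t, q). (mult s t, q)) xs"

definition lambda_bounded ::
  "('a \<Rightarrow> 'a \<Rightarrow> 'a) \<Rightarrow> ('a \<Rightarrow> 'a) \<Rightarrow> ('a \<Rightarrow> quat) \<Rightarrow> 'a \<Rightarrow> bool" where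
  "lambda_bounded mult st \<phi> s \<longleftrightarrow>
     (\<exists>C. \<forall>xs. hnorm mult st \<phi> (hlambda mult s xs) \<le> C * hnorm mult st \<phi> xs)"

end

theory Submission
  imports Defs
begin

text \<open>
  The Cauchy--Schwarz inequality for the positive semidefinite form on \<open>H_\<phi>\<close> drives both
  directions.  If every \<open>\<lambda>(s)\<close> is bounded, then \<open>\<lambda>(s\<^sup>*)\<close> is bounded by the operator norm of
  \<open>\<lambda>(s)\<close> (it is the adjoint), so the operator norm is an absolute value, and
  \<open>|\<phi>(s)|\<^sup>2 = \<langle>\<lambda>(s)\<phi>\<^sub>e \<phi>(s)\<^sup>*, \<phi>\<^sub>e\<rangle>\<close> bounds \<open>|\<phi>(s)|\<close> by \<open>\<phi>(e)\<close> times that norm.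
  Conversely, for \<open>u = s\<^sup>* s\<close> the operator \<open>\<lambda>(u)\<close> is symmetric, so Cauchy--Schwarz gives
  \<open>\<parallel>\<lambda>(u\<^sup>m)f\<parallel>\<^sup>2 \<le> \<parallel>f\<parallel> \<parallel>\<lambda>(u\<^sup>2\<^sup>m)f\<parallel>\<close>; iterating along \<open>m = 2\<^sup>k\<close> and using that \<open>\<alpha>\<close>-boundedness
  makes \<open>\<parallel>\<lambda>(u\<^sup>m)f\<parallel>\<^sup>2\<close> grow at most like \<open>\<alpha>(u)\<^sup>2\<^sup>m\<close>, one gets
  \<open>\<parallel>\<lambda>(s)f\<parallel>\<^sup>2 = \<langle>f, \<lambda>(u)f\<rangle> \<le> \<alpha>(u)\<parallel>f\<parallel>\<^sup>2 \<le> \<alpha>(s)\<^sup>2\<parallel>f\<parallel>\<^sup>2\<close>.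
\<close>

lemma qcnj_one [simp]: "qcnj 1 = 1"
  by (simp add: quat_eq_iff qcnj_def one_quat_def)

lemma qcnj_qcnj [simp]: "qcnj (qcnj a) = a"
  by (simp add: quat_eq_iff qcnj_def)

lemma qRe_add [simp]: "qRe (a + b) = qRe a + qRe b"
  by (simp add: plus_quat_def)

lemma qRe_zero [simp]: "qRe 0 = 0"
  by (simp add: zero_quat_def)

lemma qRe_sum_list: "qRe (\<Sum>x\<leftarrow>xs. f x) = (\<Sum>x\<leftarrow>xs. qRe (f x))"
  by (induction xs) auto

lemma qRe_mult_qreal: "qRe (a * qreal t) = t * qRe a"
  by (simp add: times_quat_def qreal_def)

lemma qRe_qcnj_mult_mult: "qRe (qcnj q * qcnj c * p) = qRe (qcnj p * c * q)"
  by (simp add: qcnj_def times_quat_def algebra_simps)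

lemma qabs_nonneg: "qabs a \<ge> 0"
  by (simp add: qabs_def)

lemma qabs_qcnj [simp]: "qabs (qcnj a) = qabs a"
  by (simp add: qabs_def qcnj_def)

lemma qabs_eq_0_iff: "qabs a = 0 \<longleftrightarrow> a = 0"
  by (simp add: qabs_def quat_eq_iff zero_quat_def add_nonneg_eq_0_iff)

lemma qabs_mult: "qabs (a * b) = qabs a * qabs b"
proof -
  have "(qRe (a*b))\<^sup>2 + (qIm1 (a*b))\<^sup>2 + (qIm2 (a*b))\<^sup>2 + (qIm3 (a*b))\<^sup>2
      = ((qRe a)\<^sup>2 + (qIm1 a)\<^sup>2 + (qIm2 a)\<^sup>2 + (qIm3 a)\<^sup>2) * ((qRe b)\<^sup>2 + (qIm1 b)\<^sup>2 + (qIm2 b)\<^sup>2 + (qIm3 b)\<^sup>2)"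
    by (simp add: times_quat_def power2_eq_square algebra_simps)
  then show ?thesis
    by (simp add: qabs_def real_sqrt_mult)
qed

lemma qRe_le_qabs: "qRe a \<le> qabs a"
proof -
  have "qRe a \<le> sqrt ((qRe a)\<^sup>2)" by simp
  also have "\<dots> \<le> qabs a" unfolding qabs_def by (rule real_sqrt_le_mono) simp
  finally show ?thesis .
qed

lemma mult_qcnj_self: "a * qcnj a = qreal ((qabs a)\<^sup>2)"
  by (simp add: quat_eq_iff qcnj_def times_quat_def qabs_def qreal_def algebra_simps power2_eq_square)

lemma qRe_mult_qreal_mult_qcnj: "qRe (c * qreal r * qcnj c) = r * (qabs c)\<^sup>2"
  by (simp add: qcnj_def times_quat_def qabs_def qreal_def algebra_simps power2_eq_square)

lemma discriminant_le_if_quadratic_nonneg: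
  fixes a b c :: real
  assumes nonneg: "\<And>t. 0 \<le> a + 2 * t * b + t\<^sup>2 * c" and "a \<ge> 0" "c \<ge> 0"
  shows "b\<^sup>2 \<le> a * c"
proof (cases "c = 0")
  case True
  have "b = 0"
  proof (rule ccontr)
    assume "b \<noteq> 0"
    have "0 \<le> a + 2 * (- (a + 1) / (2 * b)) * b" using nonneg[of "- (a + 1) / (2 * b)"] True by simp
    also have "\<dots> = -1" using \<open>b \<noteq> 0\<close> by (simp add: field_simps)
    finally show False by simp
  qed
  then show ?thesis using assms by simp
next
  case False
  with \<open>c \<ge> 0\<close> have "c > 0" by simp
  have "0 \<le> a + 2 * (- b / c) * b + (- b / c)\<^sup>2 * c" by (rule nonneg)
  also have "\<dots> = a - b\<^sup>2 / c" using \<open>c > 0\<close> by (simp add: field_simps power2_eq_square)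
  finally show ?thesis using \<open>c > 0\<close> by (simp add: field_simps mult.commute)
qed

lemma power_two_power_le_of_squaring:
  fixes n :: "nat \<Rightarrow> real"
  assumes "A \<ge> 0" and nonneg: "\<And>m. n m \<ge> 0" and squaring: "\<And>m. (n m)\<^sup>2 \<le> A * n (2 * m)"
  shows "n 1 ^ (2 ^ k) \<le> A ^ (2 ^ k - 1) * n (2 ^ k)"
proof (induction k)
  case 0
  then show ?case by simp
next
  case (Suc k)
  have exp_double: "(2::nat) ^ Suc k - 2 = (2 ^ k - 1) + (2 ^ k - 1)"
    using one_le_power[of "2::nat" k] by (simp only: power_Suc)
  have exp_succ: "A ^ (2 ^ Suc k - 1) = A * A ^ (2 ^ Suc k - 2)"
  proof -
    have "(2::nat) ^ Suc k - 1 = Suc (2 ^ Suc k - 2)"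
      using one_le_power[of "2::nat" k] by (simp only: power_Suc) linarith
    then show ?thesis by (metis power_Suc)
  qed
  have "n 1 ^ 2 ^ Suc k = (n 1 ^ 2 ^ k)\<^sup>2"
    by (simp add: power_mult[symmetric] mult.commute)
  also have "\<dots> \<le> (A ^ (2 ^ k - 1) * n (2 ^ k))\<^sup>2"
    using Suc nonneg by (intro power_mono) auto
  also have "\<dots> = A ^ (2 ^ Suc k - 2) * (n (2 ^ k))\<^sup>2"
    by (simp only: exp_double power_add power_mult_distrib) (simp add: power2_eq_square)
  also have "\<dots> \<le> A ^ (2 ^ Suc k - 2) * (A * n (2 ^ Suc k))"
    using squaring[of "2 ^ k"] \<open>A \<ge> 0\<close> by (intro mult_left_mono) auto
  also have "\<dots> = A ^ (2 ^ Suc k - 1) * n (2 ^ Suc k)"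
    by (simp only: exp_succ mult_ac)
  finally show ?case .
qed

text \<open>If \<open>(n m)\<^sup>2 \<le> A n(2m)\<close> and \<open>n m = O(\<gamma>\<^sup>m)\<close>, then \<open>n 1 \<le> A \<gamma>\<close>: otherwise the bound along
  \<open>m = 2\<^sup>k\<close> would force \<open>(n 1 / (A \<gamma>))\<^sup>2\<^sup>k\<close> to stay below the constant \<open>D / A\<close>.\<close>

lemma le_of_squaring_and_exponential_bound:
  fixes n :: "nat \<Rightarrow> real"
  assumes "A \<ge> 0" "\<gamma> \<ge> 0" "D \<ge> 0" and nonneg: "\<And>m. n m \<ge> 0"
    and squaring: "\<And>m. (n m)\<^sup>2 \<le> A * n (2 * m)" and growth: "\<And>m. n m \<le> D * \<gamma> ^ m"
  shows "n 1 \<le> A * \<gamma>"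
proof (rule ccontr)
  assume contra: "\<not> n 1 \<le> A * \<gamma>"
  have bound: "n 1 ^ 2 ^ k \<le> A ^ (2 ^ k - 1) * (D * \<gamma> ^ 2 ^ k)" for k
    using power_two_power_le_of_squaring[of A n k, OF \<open>A \<ge> 0\<close> nonneg squaring]
      growth[of "2 ^ k"] \<open>A \<ge> 0\<close>
    by (meson mult_left_mono order_trans zero_le_power)
  show False
  proof (cases "A = 0 \<or> \<gamma> = 0")
    case True
    then have "(n 1)\<^sup>2 \<le> 0" using bound[of 1] by auto
    then have "n 1 = 0" using nonneg[of 1] by (simp add: power2_eq_square mult_le_0_iff)
    then show False using contra True by auto
  next
    case False
    then have "A > 0" "\<gamma> > 0" using \<open>A \<ge> 0\<close> \<open>\<gamma> \<ge> 0\<close> by auto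
    define x where "x = n 1 / (A * \<gamma>)"
    have "x > 1" using contra \<open>A > 0\<close> \<open>\<gamma> > 0\<close> by (simp add: x_def)
    obtain k where k: "D / A < x ^ k" using real_arch_pow[OF \<open>x > 1\<close>] by blast
    have "k \<le> 2 ^ k" by (simp add: less_imp_le less_exp)
    then have "x ^ k \<le> x ^ 2 ^ k" using \<open>x > 1\<close> by (intro power_increasing) auto
    also have "\<dots> = n 1 ^ 2 ^ k / (A * \<gamma>) ^ 2 ^ k" by (simp add: x_def power_divide)
    also have "\<dots> \<le> A ^ (2 ^ k - 1) * (D * \<gamma> ^ 2 ^ k) / (A * \<gamma>) ^ 2 ^ k"
      using bound[of k] \<open>A > 0\<close> \<open>\<gamma> > 0\<close> by (simp add: divide_right_mono)
    also have "\<dots> = D / A"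
    proof -
      have "A ^ 2 ^ k = A * A ^ (2 ^ k - 1)"
        by (simp flip: power_Suc)
      then show ?thesis using \<open>A > 0\<close> \<open>\<gamma> > 0\<close> by (simp add: power_mult_distrib field_simps)
    qed
    finally show False using k by simp
  qed
qed

lemma absolute_value_nonneg: "absolute_value mult e st \<alpha> \<Longrightarrow> \<alpha> s \<ge> 0"
  by (simp add: absolute_value_def)

lemma absolute_value_mult: "absolute_value mult e st \<alpha> \<Longrightarrow> \<alpha> (mult s t) \<le> \<alpha> s * \<alpha> t"
  by (simp add: absolute_value_def)

lemma absolute_value_st: "absolute_value mult e st \<alpha> \<Longrightarrow> \<alpha> (st s) = \<alpha> s"
  by (simp add: absolute_value_def)

lemma absolute_value_funpow:
  assumes "absolute_value mult e st \<alpha>"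
  shows "\<alpha> ((mult u ^^ m) t) \<le> \<alpha> u ^ m * \<alpha> t"
proof (induction m)
  case 0
  then show ?case by simp
next
  case (Suc m)
  have "\<alpha> ((mult u ^^ Suc m) t) \<le> \<alpha> u * \<alpha> ((mult u ^^ m) t)"
    using absolute_value_mult[OF assms] by simp
  also have "\<dots> \<le> \<alpha> u * (\<alpha> u ^ m * \<alpha> t)"
    using Suc absolute_value_nonneg[OF assms] by (simp add: mult_left_mono)
  finally show ?case by (simp add: mult.assoc)
qed

locale pos_def_semigroup =
  fixes mult :: "'a \<Rightarrow> 'a \<Rightarrow> 'a" and e :: 'a and st :: "'a \<Rightarrow> 'a" and \<phi> :: "'a \<Rightarrow> quat"
  assumes semigroup_involution: "semigroup_involution mult e st"
    and positive_definite: "positive_definite mult st \<phi>"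
begin

lemma mult_assoc: "mult (mult s t) u = mult s (mult t u)"
  using semigroup_involution unfolding semigroup_involution_def by blast

lemma mult_e_left [simp]: "mult e s = s"
  using semigroup_involution unfolding semigroup_involution_def by blast

lemma mult_e_right [simp]: "mult s e = s"
  using semigroup_involution unfolding semigroup_involution_def by blast

lemma st_st [simp]: "st (st s) = s"
  using semigroup_involution unfolding semigroup_involution_def by blast

lemma st_mult: "st (mult s t) = mult (st t) (st s)"
  using semigroup_involution unfolding semigroup_involution_def by blast

lemma st_e [simp]: "st e = e"
  by (metis mult_e_right st_mult st_st mult_e_left)

abbreviation ip where "ip \<equiv> hinner mult st \<phi>"
abbreviation sqn where "sqn xs \<equiv> qRe (hinner mult st \<phi> xs xs)"
abbreviation hn where "hn \<equiv> hnorm mult st \<phi>"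
abbreviation lam where "lam \<equiv> hlambda mult"

lemma hinner_eq: "ip xs ys = (\<Sum>x\<leftarrow>xs. \<Sum>y\<leftarrow>ys. qcnj (snd y) * \<phi> (mult (st (fst y)) (fst x)) * snd x)"
  unfolding hinner_def by (simp only: case_prod_unfold)

lemma hinner_self_nonneg_real: "qnonneg_real (ip xs xs)"
proof -
  define k where "k = length xs"
  define s where "s i = fst (xs ! (i - 1))" for i
  define q where "q i = snd (xs ! (i - 1))" for i
  have sum_list_eq: "(\<Sum>x\<leftarrow>xs. f x) = (\<Sum>i\<in>{1..k}. f (xs ! (i - 1)))" for f :: "_ \<Rightarrow> quat"
    by (simp add: k_def sum_list_sum_nth atLeast0LessThan sum.atLeast1_atMost_eq)
  have "ip xs xs = (\<Sum>j\<in>{1..k}. \<Sum>i\<in>{1..k}. qcnj (q i) * \<phi> (mult (st (s i)) (s j)) * q j)"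
    unfolding hinner_eq by (simp add: sum_list_eq s_def q_def)
  also have "\<dots> = (\<Sum>i\<in>{1..k}. \<Sum>j\<in>{1..k}. qcnj (q i) * \<phi> (mult (st (s i)) (s j)) * q j)"
    by (rule sum.swap)
  finally show ?thesis
    using positive_definite unfolding positive_definite_def by simp
qed

lemma sqn_nonneg: "sqn xs \<ge> 0"
  using hinner_self_nonneg_real[of xs] by (auto simp: qnonneg_real_def qreal_def)

lemma phi_diag_nonneg_real: "qnonneg_real (\<phi> (mult (st s) s))"
  using hinner_self_nonneg_real[of "[(s, 1)]"] by (simp add: hinner_eq)

lemma phi_e_real: "\<phi> e = qreal (qRe (\<phi> e))"
  using phi_diag_nonneg_real[of e] by (auto simp: qnonneg_real_def qreal_def)

lemma qRe_phi_e_nonneg: "qRe (\<phi> e) \<ge> 0"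
  using phi_diag_nonneg_real[of e] by (auto simp: qnonneg_real_def qreal_def)

text \<open>Positivity of the form on \<open>\<phi>\<^sub>e + \<phi>\<^sub>s b\<close> for \<open>b = 1\<close> and \<open>b = i\<close> forces
  \<open>\<phi>(s) + \<phi>(s\<^sup>*)\<close> and \<open>\<phi>(s) i - i \<phi>(s\<^sup>*)\<close> to be real.\<close>

lemma phi_st: "\<phi> (st s) = qcnj (\<phi> s)"
proof -
  obtain r where r: "\<phi> (mult (st s) s) = qreal r"
    using phi_diag_nonneg_real[of s] by (auto simp: qnonneg_real_def)
  obtain r\<^sub>e where r\<^sub>e: "\<phi> e = qreal r\<^sub>e"
    using phi_e_real by blast
  have real: "\<exists>c. \<phi> e + qcnj b * \<phi> (st s) + \<phi> s * b + qcnj b * qreal r * b = qreal c" for b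
    using hinner_self_nonneg_real[of "[(e, 1), (s, b)]"] r
    by (auto simp: hinner_eq qnonneg_real_def add.assoc)
  obtain a where "\<phi> e + qcnj 1 * \<phi> (st s) + \<phi> s * 1 + qcnj 1 * qreal r * 1 = qreal a"
    using real by blast
  moreover obtain c where "\<phi> e + qcnj (Quat 0 1 0 0) * \<phi> (st s) + \<phi> s * Quat 0 1 0 0
      + qcnj (Quat 0 1 0 0) * qreal r * Quat 0 1 0 0 = qreal c"
    using real by blast
  ultimately show ?thesis
    by (simp add: r\<^sub>e quat_eq_iff qcnj_def times_quat_def plus_quat_def qreal_def one_quat_def)
qed

lemma qRe_hinner_commute: "qRe (ip ys xs) = qRe (ip xs ys)"
proof -
  have swap: "qRe (qcnj p * \<phi> (mult (st t) s) * q) = qRe (qcnj q * \<phi> (mult (st s) t) * p)" for p q s t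
    using phi_st[of "mult (st s) t"] by (simp add: st_mult qRe_qcnj_mult_mult)
  have "qRe (ip ys xs) = (\<Sum>x\<leftarrow>ys. \<Sum>y\<leftarrow>xs. qRe (qcnj (snd y) * \<phi> (mult (st (fst y)) (fst x)) * snd x))"
    by (simp add: hinner_eq qRe_sum_list)
  also have "\<dots> = (\<Sum>y\<leftarrow>xs. \<Sum>x\<leftarrow>ys. qRe (qcnj (snd y) * \<phi> (mult (st (fst y)) (fst x)) * snd x))"
    by (induction ys) (auto simp: sum_list_addf)
  also have "\<dots> = qRe (ip xs ys)"
    by (simp add: hinner_eq qRe_sum_list swap)
  finally show ?thesis .
qed

lemma hinner_append_left: "ip (xs @ ys) zs = ip xs zs + ip ys zs"
  by (simp add: hinner_def)

lemma hinner_append_right: "ip zs (xs @ ys) = ip zs xs + ip zs ys"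
  by (simp add: hinner_eq sum_list_addf)

definition hscale :: "real \<Rightarrow> ('a \<times> quat) list \<Rightarrow> ('a \<times> quat) list" where
  "hscale t xs = map (\<lambda>(u, p). (u, p * qreal t)) xs"

lemma qRe_hinner_hscale_left: "qRe (ip (hscale t xs) ys) = t * qRe (ip xs ys)"
proof -
  have "qRe (qcnj p * c * (q * qreal t)) = t * qRe (qcnj p * c * q)" for p c q
    by (simp flip: mult.assoc add: qRe_mult_qreal)
  then show ?thesis
    by (simp add: hinner_eq hscale_def qRe_sum_list case_prod_beta sum_list_const_mult)
qed

lemma qRe_hinner_hscale_right: "qRe (ip ys (hscale t xs)) = t * qRe (ip ys xs)"
  using qRe_hinner_hscale_left qRe_hinner_commute by metis

lemma hinner_Cauchy_Schwarz: "(qRe (ip xs ys))\<^sup>2 \<le> sqn xs * sqn ys"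
proof (rule discriminant_le_if_quadratic_nonneg)
  show "0 \<le> sqn xs + 2 * t * qRe (ip xs ys) + t\<^sup>2 * sqn ys" for t
    using sqn_nonneg[of "xs @ hscale t ys"]
    by (simp add: hinner_append_left hinner_append_right qRe_hinner_hscale_left
        qRe_hinner_hscale_right qRe_hinner_commute[of xs ys] power2_eq_square algebra_simps)
qed (simp_all add: sqn_nonneg)

lemma hnorm_nonneg: "hn xs \<ge> 0"
  using sqn_nonneg[of xs] by (simp add: hnorm_def)

lemma hnorm_squared: "(hn xs)\<^sup>2 = sqn xs"
  using sqn_nonneg[of xs] by (simp add: hnorm_def)

lemma abs_qRe_hinner_le: "\<bar>qRe (ip xs ys)\<bar> \<le> hn xs * hn ys"
proof -
  have "\<bar>qRe (ip xs ys)\<bar> = sqrt ((qRe (ip xs ys))\<^sup>2)" by simp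
  also have "\<dots> \<le> sqrt (sqn xs * sqn ys)" using hinner_Cauchy_Schwarz by (rule real_sqrt_le_mono)
  also have "\<dots> = hn xs * hn ys" by (simp add: hnorm_def real_sqrt_mult)
  finally show ?thesis .
qed

lemma hinner_hlambda: "ip (lam s xs) ys = ip xs (lam (st s) ys)"
  by (simp add: hinner_eq hlambda_def case_prod_beta o_def st_mult mult_assoc)

lemma hlambda_mult: "lam (mult s t) xs = lam s (lam t xs)"
  by (simp add: hlambda_def case_prod_beta o_def mult_assoc)

lemma hlambda_e [simp]: "lam e xs = xs"
  by (simp add: hlambda_def case_prod_beta)

lemma sqn_e_one: "sqn [(e, 1)] = qRe (\<phi> e)"
  by (simp add: hinner_eq)

text \<open>Cauchy--Schwarz applied to \<open>\<lambda>(s)(\<phi>\<^sub>e \<phi>(s)\<^sup>*) = \<phi>\<^sub>s \<phi>(s)\<^sup>*\<close> and \<open>\<phi>\<^sub>e\<close>, whose inner product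
  is \<open>|\<phi>(s)|\<^sup>2\<close>.\<close>

lemma qabs_phi_le:
  assumes "A \<ge> 0" and bound: "\<forall>xs. hn (lam s xs) \<le> A * hn xs"
  shows "qabs (\<phi> s) \<le> A * qRe (\<phi> e)"
proof -
  define a where "a = qabs (\<phi> s)"
  define r where "r = qRe (\<phi> e)"
  have "r \<ge> 0" "a \<ge> 0" using qRe_phi_e_nonneg qabs_nonneg by (simp_all add: r_def a_def)
  have "qRe (ip [(s, qcnj (\<phi> s))] [(e, 1)]) = a\<^sup>2"
    by (simp add: hinner_eq mult_qcnj_self a_def qreal_def)
  moreover have "sqn [(e, qcnj (\<phi> s))] = r * a\<^sup>2"
  proof -
    have "sqn [(e, qcnj (\<phi> s))] = qRe (\<phi> s * \<phi> e * qcnj (\<phi> s))"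
      by (simp add: hinner_eq)
    also have "\<phi> e = qreal r"
      using phi_e_real by (simp add: r_def)
    finally show ?thesis by (simp add: qRe_mult_qreal_mult_qcnj a_def)
  qed
  moreover have "lam s [(e, qcnj (\<phi> s))] = [(s, qcnj (\<phi> s))]"
    by (simp add: hlambda_def)
  ultimately have "a\<^sup>2 \<le> hn (lam s [(e, qcnj (\<phi> s))]) * hn [(e, 1)]"
    using abs_qRe_hinner_le[of "lam s [(e, qcnj (\<phi> s))]" "[(e, 1)]"] by simp
  also have "\<dots> \<le> A * hn [(e, qcnj (\<phi> s))] * hn [(e, 1)]"
    using bound hnorm_nonneg by (simp add: mult_right_mono)
  also have "\<dots> = A * a * r"
    using \<open>sqn [(e, qcnj (\<phi> s))] = r * a\<^sup>2\<close> \<open>r \<ge> 0\<close> \<open>a \<ge> 0\<close> sqn_e_one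
    by (simp add: hnorm_def real_sqrt_mult r_def)
  finally have "a * a \<le> (A * r) * a" by (simp add: power2_eq_square mult_ac)
  then have "a \<le> A * r"
    using \<open>a \<ge> 0\<close> \<open>A \<ge> 0\<close> \<open>r \<ge> 0\<close> by (cases "a = 0") (auto simp: mult_le_cancel_right)
  then show ?thesis by (simp add: a_def r_def)
qed

lemma hnorm_hlambda_st_le:
  assumes "A \<ge> 0" and bound: "\<forall>xs. hn (lam s xs) \<le> A * hn xs"
  shows "hn (lam (st s) xs) \<le> A * hn xs"
proof -
  define y where "y = lam (st s) xs"
  have "(hn y)\<^sup>2 = qRe (ip xs (lam s y))"
    by (simp add: hnorm_squared y_def hinner_hlambda)
  also have "\<dots> \<le> hn xs * hn (lam s y)"
    using abs_qRe_hinner_le by (metis abs_le_iff)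
  also have "\<dots> \<le> hn xs * (A * hn y)"
    using bound hnorm_nonneg by (simp add: mult_left_mono)
  finally have "hn y * hn y \<le> (A * hn xs) * hn y"
    by (simp add: power2_eq_square mult_ac)
  then have "hn y \<le> A * hn xs"
    using hnorm_nonneg[of y] hnorm_nonneg[of xs] \<open>A \<ge> 0\<close>
    by (cases "hn y = 0") (auto simp: mult_le_cancel_right)
  then show ?thesis by (simp add: y_def)
qed

definition hlambda_bounds :: "'a \<Rightarrow> real set" where
  "hlambda_bounds s = {C. C \<ge> 0 \<and> (\<forall>xs. hn (lam s xs) \<le> C * hn xs)}"

definition hlambda_opnorm :: "'a \<Rightarrow> real" where
  "hlambda_opnorm s = Inf (hlambda_bounds s)"

lemma hlambda_bounds_ne:
  assumes "lambda_bounded mult st \<phi> s"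
  shows "hlambda_bounds s \<noteq> {}"
proof -
  obtain C where C: "\<forall>xs. hn (lam s xs) \<le> C * hn xs"
    using assms unfolding lambda_bounded_def by blast
  have "hn (lam s xs) \<le> max C 0 * hn xs" for xs
    using C hnorm_nonneg[of xs] by (meson max.cobounded1 mult_right_mono order_trans)
  then have "max C 0 \<in> hlambda_bounds s"
    by (simp add: hlambda_bounds_def)
  then show ?thesis by blast
qed

lemma hlambda_opnorm_le: "C \<in> hlambda_bounds s \<Longrightarrow> hlambda_opnorm s \<le> C"
  unfolding hlambda_opnorm_def by (rule cInf_lower) (auto simp: hlambda_bounds_def bdd_below_def)

lemma hlambda_opnorm_mem:
  assumes "lambda_bounded mult st \<phi> s"
  shows "hlambda_opnorm s \<in> hlambda_bounds s"
proof -
  note ne = hlambda_bounds_ne[OF assms]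
  have "hlambda_opnorm s \<ge> 0"
    unfolding hlambda_opnorm_def using ne by (rule cInf_greatest) (simp add: hlambda_bounds_def)
  moreover have "hn (lam s xs) \<le> hlambda_opnorm s * hn xs" for xs
  proof (cases "hn xs = 0")
    case True
    obtain C where "C \<in> hlambda_bounds s" using ne by blast
    with True show ?thesis by (auto simp: hlambda_bounds_def dest: spec[of _ xs])
  next
    case False
    then have "hn xs > 0" using hnorm_nonneg[of xs] by simp
    have "hn (lam s xs) / hn xs \<le> hlambda_opnorm s"
      unfolding hlambda_opnorm_def using ne
      by (rule cInf_greatest) (use \<open>hn xs > 0\<close> in \<open>auto simp: hlambda_bounds_def divide_le_eq\<close>)
    then show ?thesis using \<open>hn xs > 0\<close> by (simp add: divide_le_eq)
  qed
  ultimately show ?thesis by (simp add: hlambda_bounds_def)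
qed

lemma hlambda_opnorm_nonneg: "lambda_bounded mult st \<phi> s \<Longrightarrow> hlambda_opnorm s \<ge> 0"
  using hlambda_opnorm_mem by (simp add: hlambda_bounds_def)

lemma hnorm_hlambda_le_opnorm:
  "lambda_bounded mult st \<phi> s \<Longrightarrow> hn (lam s xs) \<le> hlambda_opnorm s * hn xs"
  using hlambda_opnorm_mem by (simp add: hlambda_bounds_def)

lemma hlambda_opnorm_mult:
  assumes "lambda_bounded mult st \<phi> s" "lambda_bounded mult st \<phi> t"
  shows "hlambda_opnorm (mult s t) \<le> hlambda_opnorm s * hlambda_opnorm t"
proof (rule hlambda_opnorm_le)
  have "hn (lam (mult s t) xs) \<le> hlambda_opnorm s * hlambda_opnorm t * hn xs" for xs
  proof -
    have "hn (lam (mult s t) xs) \<le> hlambda_opnorm s * hn (lam t xs)"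
      using hnorm_hlambda_le_opnorm[OF assms(1)] by (simp add: hlambda_mult)
    also have "\<dots> \<le> hlambda_opnorm s * (hlambda_opnorm t * hn xs)"
      using assms by (simp add: hnorm_hlambda_le_opnorm hlambda_opnorm_nonneg mult_left_mono)
    finally show ?thesis by (simp add: mult.assoc)
  qed
  then show "hlambda_opnorm s * hlambda_opnorm t \<in> hlambda_bounds (mult s t)"
    using assms by (simp add: hlambda_bounds_def hlambda_opnorm_nonneg)
qed

lemma hlambda_opnorm_st_le:
  "lambda_bounded mult st \<phi> s \<Longrightarrow> hlambda_opnorm (st s) \<le> hlambda_opnorm s"
  by (rule hlambda_opnorm_le)
    (simp add: hlambda_bounds_def hlambda_opnorm_nonneg hnorm_hlambda_st_le hnorm_hlambda_le_opnorm)

lemma hlambda_opnorm_e: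
  assumes "qRe (\<phi> e) > 0"
  shows "hlambda_opnorm e = 1"
proof (rule antisym)
  show "hlambda_opnorm e \<le> 1"
    by (rule hlambda_opnorm_le) (simp add: hlambda_bounds_def)
  have "lambda_bounded mult st \<phi> e"
    unfolding lambda_bounded_def by (rule exI[of _ 1]) simp
  then have "hn [(e, 1)] \<le> hlambda_opnorm e * hn [(e, 1)]"
    using hnorm_hlambda_le_opnorm by fastforce
  moreover have "hn [(e, 1)] > 0"
    using assms sqn_e_one by (simp add: hnorm_def)
  ultimately show "1 \<le> hlambda_opnorm e" by simp
qed

text \<open>If \<open>\<phi>(e) = 0\<close>, then \<open>qabs_phi_le\<close> forces \<open>\<phi> = 0\<close> and the constant \<open>1\<close> is a valid
  absolute value; otherwise the operator norm is one.\<close>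

lemma exponentially_bounded_if_lambda_bounded:
  assumes bounded: "\<forall>s. lambda_bounded mult st \<phi> s"
  shows "exponentially_bounded mult e st \<phi>"
proof -
  have phi_le: "qabs (\<phi> s) \<le> hlambda_opnorm s * qRe (\<phi> e)" for s
    using bounded qabs_phi_le hlambda_opnorm_nonneg hnorm_hlambda_le_opnorm by blast
  show ?thesis
  proof (cases "qRe (\<phi> e) = 0")
    case True
    then have "\<phi> s = 0" for s
      using phi_le[of s] qabs_nonneg[of "\<phi> s"] by (simp add: qabs_eq_0_iff)
    then have "absolute_value mult e st (\<lambda>_. 1) \<and> alpha_bounded (\<lambda>_. 1) \<phi>"
      by (auto simp: absolute_value_def alpha_bounded_def qabs_def zero_quat_def intro: exI[of _ 1])
    then show ?thesis unfolding exponentially_bounded_def by blast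
  next
    case False
    then have "qRe (\<phi> e) > 0" using qRe_phi_e_nonneg by simp
    have "hlambda_opnorm (st s) = hlambda_opnorm s" for s
      using hlambda_opnorm_st_le[of s] hlambda_opnorm_st_le[of "st s"] bounded by fastforce
    then have "absolute_value mult e st hlambda_opnorm"
      using bounded hlambda_opnorm_nonneg hlambda_opnorm_mult hlambda_opnorm_e[OF \<open>qRe (\<phi> e) > 0\<close>]
      by (simp add: absolute_value_def)
    moreover have "alpha_bounded hlambda_opnorm \<phi>"
      unfolding alpha_bounded_def
    proof (intro exI conjI allI)
      show "qRe (\<phi> e) + 1 > 0" using qRe_phi_e_nonneg by linarith
      show "qabs (\<phi> s) \<le> (qRe (\<phi> e) + 1) * hlambda_opnorm s" for s
        using phi_le[of s] hlambda_opnorm_nonneg[of s] bounded by (simp add: algebra_simps)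
    qed
    ultimately show ?thesis unfolding exponentially_bounded_def by blast
  qed
qed

lemma hlambda_funpow: "(lam u ^^ m) xs = map (\<lambda>x. ((mult u ^^ m) (fst x), snd x)) xs"
  by (induction m) (auto simp: hlambda_def case_prod_beta o_def)

lemma hinner_hlambda_funpow_symmetric:
  assumes "st u = u"
  shows "ip ((lam u ^^ m) xs) ys = ip xs ((lam u ^^ m) ys)"
proof (induction m arbitrary: xs ys)
  case 0
  then show ?case by simp
next
  case (Suc m)
  have "ip ((lam u ^^ Suc m) xs) ys = ip ((lam u ^^ m) xs) (lam u ys)"
    using hinner_hlambda[of u] assms by simp
  also have "\<dots> = ip xs ((lam u ^^ Suc m) ys)"
    by (simp add: Suc funpow_Suc_right del: funpow.simps)
  finally show ?case .
qed

lemma sqn_hlambda_funpow_squared_le: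
  assumes "st u = u"
  shows "(sqn ((lam u ^^ m) xs))\<^sup>2 \<le> sqn xs * sqn ((lam u ^^ (2 * m)) xs)"
proof -
  have "sqn ((lam u ^^ m) xs) = qRe (ip xs ((lam u ^^ m) ((lam u ^^ m) xs)))"
    by (simp add: hinner_hlambda_funpow_symmetric[OF assms])
  also have "(lam u ^^ m) ((lam u ^^ m) xs) = (lam u ^^ (2 * m)) xs"
    by (simp add: mult_2 funpow_add)
  finally show ?thesis
    using hinner_Cauchy_Schwarz by metis
qed

context
  fixes \<alpha> :: "'a \<Rightarrow> real" and C :: real
  assumes absolute_value: "absolute_value mult e st \<alpha>"
    and phi_le: "\<And>s. qabs (\<phi> s) \<le> C * \<alpha> s" and "C \<ge> 0"
begin

lemma qRe_phi_term_le: "qRe (qcnj p * \<phi> (mult (st s) t) * q) \<le> C * (qabs p * \<alpha> s) * (qabs q * \<alpha> t)"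
proof -
  have "qRe (qcnj p * \<phi> (mult (st s) t) * q) \<le> qabs p * qabs (\<phi> (mult (st s) t)) * qabs q"
    using qRe_le_qabs by (metis qabs_mult qabs_qcnj)
  also have "\<dots> \<le> qabs p * (C * (\<alpha> s * \<alpha> t)) * qabs q"
  proof -
    have "qabs (\<phi> (mult (st s) t)) \<le> C * (\<alpha> s * \<alpha> t)"
      using phi_le[of "mult (st s) t"] absolute_value_mult[OF absolute_value, of "st s" t]
        absolute_value_st[OF absolute_value] \<open>C \<ge> 0\<close>
      by (metis mult_left_mono order_trans)
    then show ?thesis using qabs_nonneg by (simp add: mult_left_mono mult_right_mono)
  qed
  finally show ?thesis by (simp add: mult_ac)
qed

lemma sqn_hlambda_funpow_le:
  "sqn ((lam u ^^ m) xs) \<le> (C * (\<Sum>x\<leftarrow>xs. qabs (snd x) * \<alpha> (fst x))\<^sup>2) * ((\<alpha> u)\<^sup>2) ^ m"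
proof -
  define w where "w = mult u ^^ m"
  define f where "f x = qabs (snd x) * \<alpha> (fst x)" for x
  define c where "c = C * ((\<alpha> u)\<^sup>2) ^ m"
  have f_w: "qabs (snd x) * \<alpha> (w (fst x)) \<le> \<alpha> u ^ m * f x" for x
    using absolute_value_funpow[OF absolute_value, where u = u and m = m and t = "fst x"] qabs_nonneg[of "snd x"]
    by (simp add: w_def f_def mult_left_mono mult.left_commute)
  have term_le: "qRe (qcnj (snd y) * \<phi> (mult (st (w (fst y))) (w (fst x))) * snd x) \<le> c * f y * f x" for x y
  proof -
    have "qRe (qcnj (snd y) * \<phi> (mult (st (w (fst y))) (w (fst x))) * snd x)
        \<le> C * (qabs (snd y) * \<alpha> (w (fst y))) * (qabs (snd x) * \<alpha> (w (fst x)))"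
      by (rule qRe_phi_term_le)
    also have "\<dots> \<le> C * (\<alpha> u ^ m * f y) * (\<alpha> u ^ m * f x)"
      by (rule mult_mono[OF mult_left_mono[OF f_w \<open>C \<ge> 0\<close>] f_w])
        (use \<open>C \<ge> 0\<close> qabs_nonneg absolute_value_nonneg[OF absolute_value] in \<open>simp_all add: f_def\<close>)
    also have "\<dots> = c * f y * f x"
      by (simp add: c_def power2_eq_square power_mult_distrib)
    finally show ?thesis .
  qed
  have "sqn ((lam u ^^ m) xs)
      = (\<Sum>x\<leftarrow>xs. \<Sum>y\<leftarrow>xs. qRe (qcnj (snd y) * \<phi> (mult (st (w (fst y))) (w (fst x))) * snd x))"
    by (simp add: hlambda_funpow hinner_eq qRe_sum_list o_def w_def)
  also have "\<dots> \<le> (\<Sum>x\<leftarrow>xs. \<Sum>y\<leftarrow>xs. c * f y * f x)"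
    using term_le by (intro sum_list_mono) auto
  also have "\<dots> = c * (\<Sum>x\<leftarrow>xs. f x)\<^sup>2"
    by (simp add: sum_list_const_mult sum_list_mult_const power2_eq_square)
  finally show ?thesis by (simp add: c_def f_def mult_ac)
qed

lemma hnorm_hlambda_le_symmetric:
  assumes "st u = u"
  shows "hn (lam u xs) \<le> \<alpha> u * hn xs"
proof -
  have "sqn ((lam u ^^ 1) xs) \<le> sqn xs * (\<alpha> u)\<^sup>2"
    by (rule le_of_squaring_and_exponential_bound[where n = "\<lambda>m. sqn ((lam u ^^ m) xs)"
          and D = "C * (\<Sum>x\<leftarrow>xs. qabs (snd x) * \<alpha> (fst x))\<^sup>2"])
      (use sqn_nonneg sqn_hlambda_funpow_squared_le[OF assms] sqn_hlambda_funpow_le \<open>C \<ge> 0\<close> in auto)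
  then have "sqrt (sqn (lam u xs)) \<le> sqrt ((\<alpha> u * hn xs)\<^sup>2)"
    by (simp add: power_mult_distrib hnorm_squared mult.commute)
  then show ?thesis
    using absolute_value_nonneg[OF absolute_value, of u] hnorm_nonneg[of xs] by (simp add: hnorm_def)
qed

lemma hnorm_hlambda_le: "hn (lam s xs) \<le> \<alpha> s * hn xs"
proof -
  define u where "u = mult (st s) s"
  have "st u = u" by (simp add: u_def st_mult)
  have "(hn (lam s xs))\<^sup>2 = qRe (ip xs (lam u xs))"
    by (simp add: hnorm_squared hinner_hlambda u_def hlambda_mult)
  also have "\<dots> \<le> hn xs * hn (lam u xs)"
    using abs_qRe_hinner_le by (metis abs_le_iff)
  also have "\<dots> \<le> hn xs * (\<alpha> u * hn xs)"
    using hnorm_hlambda_le_symmetric[OF \<open>st u = u\<close>] hnorm_nonneg by (simp add: mult_left_mono)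
  also have "\<dots> = \<alpha> u * (hn xs)\<^sup>2"
    by (simp add: power2_eq_square mult_ac)
  also have "\<dots> \<le> (\<alpha> s)\<^sup>2 * (hn xs)\<^sup>2"
    using absolute_value_mult[OF absolute_value, of "st s" s] absolute_value_st[OF absolute_value, of s]
    by (intro mult_right_mono) (simp_all add: u_def power2_eq_square)
  also have "\<dots> = (\<alpha> s * hn xs)\<^sup>2"
    by (simp add: power_mult_distrib)
  finally show ?thesis
    using absolute_value_nonneg[OF absolute_value, of s] hnorm_nonneg
    by (meson mult_nonneg_nonneg power2_le_imp_le)
qed

end

lemma lambda_bounded_if_exponentially_bounded:
  "exponentially_bounded mult e st \<phi> \<Longrightarrow> lambda_bounded mult st \<phi> s"
  unfolding exponentially_bounded_def alpha_bounded_def lambda_bounded_def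
  by (metis hnorm_hlambda_le less_imp_le)

end

theorem mainTheorem5:
  fixes mult :: "'a \<Rightarrow> 'a \<Rightarrow> 'a" and e :: 'a and st :: "'a \<Rightarrow> 'a"
    and \<phi> :: "'a \<Rightarrow> quat"
  assumes "semigroup_involution mult e st"
    and "positive_definite mult st \<phi>"
  shows "exponentially_bounded mult e st \<phi> \<longleftrightarrow> (\<forall>s. lambda_bounded mult st \<phi> s)"
proof -
  interpret pos_def_semigroup mult e st \<phi>
    using assms by unfold_locales
  show ?thesis
    using exponentially_bounded_if_lambda_bounded lambda_bounded_if_exponentially_bounded by blast
qed

end
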